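(* In the online tolling setting described in the context, let $\bm{\pi}$ be the algorithm that sets $\boldsymbol{\tau}^{(1)}=\bm{0}$ and, after observing the equilibrium edge flows $\bm{x}^t$ under $\boldsymbol{\tau}^{(t)}$, updates $\boldsymbol{\tau}^{(t+1)}=(\boldsymbol{\tau}^{(t)}-\gamma(\bm{c}-\bm{x}^t))_+$ (componentwise positive part) with step size $\gamma>0$. Then $$R_T(\bm{\pi})\le\gamma T\,\frac{|E|\,(\max_{e\in E}c_e+|\mathcal{U}|)^2}{2}.$$
   Context: Network: directed graph $G=(V,E)$, edge capacities $\bm{c}=\{c_e\}$ with $c_e\ge0$, fixed edge travel times $l_e$, $l_P=\sum_{e\in P}l_e$. Finite user set $\mathcal{U}$; user $u$ has fixed outside-option cost $\lambda_u$. In each period $t=1,\dots,T$, O-D pairs $w^t_u$ and values of time $v^t_u\ge0$ are drawn i.i.d. across periods from a distribution $\mathcal{D}$; $\mathcal{P}^t_u$ is the finite set of paths for $w^t_u$. Given tolls $\boldsymbol{\tau}^{(t)}$, the period-$t$ equilibrium assigns each user to a path $P\in\mathcal{P}^t_u$ or the outside option so as to minimize cost ($v^t_ul_P+\sum_{e\in P}\tau^{(t)}_e$ for a path, $\lambda_u$ for the outside option; capacities need not be respected), encoded by binary $f^t_{P,u},f^t_{o,u}$, with edge flows $x^t_e=\sum_u\sum_{P\in\mathcal{P}^t_u:e\in P}f^t_{P,u}$. Let $U_t=\sum_u(v^t_u\sum_Pl_Pf^t_{P,u}+\lambda_uf^t_{o,u})$ and $U^*_t$ be the minimum of this objective over binary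 assignments (each user exactly one path or the outside option) satisfying $\sum_u\sum_{P\ni e}f_{P,u}\le c_e$ for all $e$. Regret: $R_T(\bm{\pi})=\mathbb{E}[\sum_{t=1}^T(U_t-U^*_t)]$, expectation over $\mathcal{D}$. *)

theory Defs
  imports "HOL-Probability.Probability"
begin

text \<open>A path is represented by its
  set of edges (the paper only uses paths through l_P = sum of l_e over e in P and
  through the incidence relation e in P). A per-period scenario assigns to every
  user u its O-D pair and its value of time. An assignment gives every user either
  a path (Some P) or the outside option (None); this is exactly the binary encoding
  f_{P,u}, f_{o,u} with "each user exactly one path or the outside option".\<close>

type_synonym 'v edge = "'v \<times> 'v"
type_synonym ('u, 'v) scenario = "'u \<Rightarrow> ('v \<times> 'v) \<times> real"
type_synonym ('u, 'v) assignment = "'u \<Rightarrow> 'v edge set option"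

definition path_len :: "('v edge \<Rightarrow> real) \<Rightarrow> 'v edge set \<Rightarrow> real" where
  "path_len l P = (\<Sum>e\<in>P. l e)"

definition admissible ::
  "('v \<times> 'v \<Rightarrow> 'v edge set set) \<Rightarrow> ('u, 'v) scenario \<Rightarrow> 'u \<Rightarrow> 'v edge set option \<Rightarrow> bool" where
  "admissible Paths s u opt = (case opt of None \<Rightarrow> True | Some P \<Rightarrow> P \<in> Paths (fst (s u)))"

definition feasible_assignment ::
  "('v \<times> 'v \<Rightarrow> 'v edge set set) \<Rightarrow> ('u, 'v) scenario \<Rightarrow> ('u, 'v) assignment \<Rightarrow> bool" where
  "feasible_assignment Paths s a = (\<forall>u. admissible Paths s u (a u))"

definition flow :: "('u::finite, 'v) assignment \<Rightarrow> 'v edge \<Rightarrow> real" where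
  "flow a e = real (card {u. \<exists>P. a u = Some P \<and> e \<in> P})"

definition user_cost ::
  "('v edge \<Rightarrow> real) \<Rightarrow> ('u \<Rightarrow> real) \<Rightarrow> ('v edge \<Rightarrow> real) \<Rightarrow> ('u, 'v) scenario \<Rightarrow> 'u
     \<Rightarrow> 'v edge set option \<Rightarrow> real" where
  "user_cost l lam tau s u opt = (case opt of None \<Rightarrow> lam u
      | Some P \<Rightarrow> snd (s u) * path_len l P + (\<Sum>e\<in>P. tau e))"

definition is_equilibrium ::
  "('v \<times> 'v \<Rightarrow> 'v edge set set) \<Rightarrow> ('v edge \<Rightarrow> real) \<Rightarrow> ('u \<Rightarrow> real) \<Rightarrow> ('v edge \<Rightarrow> real)
     \<Rightarrow> ('u, 'v) scenario \<Rightarrow> ('u, 'v) assignment \<Rightarrow> bool" where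
  "is_equilibrium Paths l lam tau s a =
     (feasible_assignment Paths s a \<and>
      (\<forall>u opt. admissible Paths s u opt \<longrightarrow> user_cost l lam tau s u (a u) \<le> user_cost l lam tau s u opt))"

definition social_cost ::
  "('v edge \<Rightarrow> real) \<Rightarrow> ('u::finite \<Rightarrow> real) \<Rightarrow> ('u, 'v) scenario \<Rightarrow> ('u, 'v) assignment \<Rightarrow> real" where
  "social_cost l lam s a = (\<Sum>u\<in>UNIV. case a u of None \<Rightarrow> lam u
      | Some P \<Rightarrow> snd (s u) * path_len l P)"

definition opt_cost ::
  "('v \<times> 'v \<Rightarrow> 'v edge set set) \<Rightarrow> 'v edge set \<Rightarrow> ('v edge \<Rightarrow> real) \<Rightarrow> ('v edge \<Rightarrow> real)
     \<Rightarrow> ('u::finite \<Rightarrow> real) \<Rightarrow> ('u, 'v) scenario \<Rightarrow> real" where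
  "opt_cost Paths E c l lam s =
     Min (social_cost l lam s ` {a. feasible_assignment Paths s a \<and> (\<forall>e\<in>E. flow a e \<le> c e)})"

text \<open>Tolls of the algorithm along a realized scenario sequence omega (periods indexed
  from 0: tolls ... 0 is tau^(1)). sel t tau s is the equilibrium observed in period t.\<close>
primrec tolls ::
  "(nat \<Rightarrow> ('v edge \<Rightarrow> real) \<Rightarrow> ('u::finite, 'v) scenario \<Rightarrow> ('u, 'v) assignment)
     \<Rightarrow> 'v edge set \<Rightarrow> ('v edge \<Rightarrow> real) \<Rightarrow> real \<Rightarrow> (nat \<Rightarrow> ('u, 'v) scenario) \<Rightarrow> nat
     \<Rightarrow> 'v edge \<Rightarrow> real" where
  "tolls sel E c \<gamma> \<omega> 0 = (\<lambda>e. 0)"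
| "tolls sel E c \<gamma> \<omega> (Suc t) =
     (\<lambda>e. if e \<in> E then max 0 (tolls sel E c \<gamma> \<omega> t e
              - \<gamma> * (c e - flow (sel t (tolls sel E c \<gamma> \<omega> t) (\<omega> t)) e)) else 0)"

definition regret ::
  "('u::finite, 'v) scenario measure \<Rightarrow> nat
     \<Rightarrow> (nat \<Rightarrow> ('v edge \<Rightarrow> real) \<Rightarrow> ('u, 'v) scenario \<Rightarrow> ('u, 'v) assignment)
     \<Rightarrow> ('v \<times> 'v \<Rightarrow> 'v edge set set) \<Rightarrow> 'v edge set \<Rightarrow> ('v edge \<Rightarrow> real) \<Rightarrow> ('v edge \<Rightarrow> real)
     \<Rightarrow> ('u \<Rightarrow> real) \<Rightarrow> real \<Rightarrow> real" where
  "regret D T sel Paths E c l lam \<gamma> =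
     (\<integral>\<omega>. (\<Sum>t<T. social_cost l lam (\<omega> t) (sel t (tolls sel E c \<gamma> \<omega> t) (\<omega> t))
                  - opt_cost Paths E c l lam (\<omega> t)) \<partial>(PiM {..<T} (\<lambda>_. D)))"

end

theory Submission
  imports Defs
begin

text \<open>At an equilibrium under nonnegative tolls \<open>\<tau>\<close> no user can lower her toll-inclusive cost
  by switching to her option in a capacity-respecting optimum. Summing over the users, and noting
  that the tolls paid equal \<open>\<Sum>\<^sub>e \<tau>\<^sub>e x\<^sub>e\<close>, gives \<open>U\<^sub>t - U\<^sup>*\<^sub>t \<le> \<Sum>\<^sub>e \<tau>\<^sub>e (c\<^sub>e - x\<^sub>e)\<close>: the regret of
  a period is bounded by the dual value of the capacity constraints. The toll update is
  projected gradient descent on this dual, so the potential \<open>\<parallel>\<tau>\<parallel>\<^sup>2\<close> gives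
  \<open>\<Sum>\<^sub>t \<tau>\<^sup>t \<bullet> g\<^sup>t \<le> \<gamma>/2 \<Sum>\<^sub>t \<parallel>g\<^sup>t\<parallel>\<^sup>2\<close> for \<open>g\<^sup>t = c - x\<^sup>t\<close>, whose entries are bounded by
  \<open>max c + |\<U>|\<close>. The bound holds for every scenario sequence, hence in expectation.\<close>

lemma tolls_nonneg: "tolls sel E c \<gamma> \<omega> t e \<ge> 0"
  by (induction t arbitrary: e) auto

lemma flow_nonneg: "0 \<le> flow a e"
  by (simp add: flow_def)

lemma flow_le_card_users: "flow (a :: ('u::finite, 'v) assignment) e \<le> CARD('u)"
  unfolding flow_def by (simp add: card_mono)

lemma feasible_assignment_Some_subset:
  assumes "feasible_assignment Paths s a" "a u = Some P" "\<forall>w. \<forall>P\<in>Paths w. P \<subseteq> E"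
  shows "P \<subseteq> E"
proof -
  have "admissible Paths s u (a u)"
    using assms(1) by (simp add: feasible_assignment_def)
  then have "P \<in> Paths (fst (s u))"
    using assms(2) by (simp add: admissible_def)
  then show ?thesis
    using assms(3) by blast
qed

lemma sum_tolls_paid_eq_sum_flow:
  fixes a :: "('u::finite, 'v) assignment"
  assumes "finite E" and "\<And>u P. a u = Some P \<Longrightarrow> P \<subseteq> E"
  shows "(\<Sum>u\<in>UNIV. case a u of None \<Rightarrow> 0 | Some P \<Rightarrow> (\<Sum>e\<in>P. tau e))
         = (\<Sum>e\<in>E. tau e * flow a e)"
proof -
  let ?uses = "\<lambda>u e. \<exists>P. a u = Some P \<and> e \<in> P"
  have paid: "(case a u of None \<Rightarrow> 0 | Some P \<Rightarrow> (\<Sum>e\<in>P. tau e))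
      = (\<Sum>e\<in>E. if ?uses u e then tau e else 0)" for u
  proof (cases "a u")
    case (Some P)
    then have "E \<inter> P = P" using assms(2) by blast
    then show ?thesis using Some \<open>finite E\<close> by (simp add: sum.inter_restrict[symmetric])
  qed simp
  have charged: "tau e * flow a e = (\<Sum>u\<in>UNIV. if ?uses u e then tau e else 0)" for e
    by (simp add: flow_def sum.If_cases)
  show ?thesis
    unfolding paid charged by (rule sum.swap)
qed

lemma sum_user_cost_eq:
  fixes a :: "('u::finite, 'v) assignment"
  assumes "finite E" and "\<And>u P. a u = Some P \<Longrightarrow> P \<subseteq> E"
  shows "(\<Sum>u\<in>UNIV. user_cost l lam tau s u (a u))
         = social_cost l lam s a + (\<Sum>e\<in>E. tau e * flow a e)"
proof -
  have "(\<Sum>u\<in>UNIV. user_cost l lam tau s u (a u))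
     = (\<Sum>u\<in>UNIV. (case a u of None \<Rightarrow> lam u | Some P \<Rightarrow> snd (s u) * path_len l P)
          + (case a u of None \<Rightarrow> 0 | Some P \<Rightarrow> (\<Sum>e\<in>P. tau e)))"
    by (rule sum.cong) (auto simp: user_cost_def split: option.splits)
  then show ?thesis
    by (simp add: sum.distrib social_cost_def sum_tolls_paid_eq_sum_flow[OF assms])
qed

lemma finite_feasible_assignments:
  fixes s :: "('u::finite, 'v) scenario"
  assumes "\<forall>w. finite (Paths w)"
  shows "finite {a. feasible_assignment Paths s a}"
proof (rule finite_subset)
  let ?Opts = "\<lambda>u. insert None (Some ` Paths (fst (s u)))"
  show "{a. feasible_assignment Paths s a} \<subseteq> PiE UNIV ?Opts"
  proof
    fix a assume a: "a \<in> {a. feasible_assignment Paths s a}"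
    have "a u \<in> ?Opts u" for u
    proof -
      have "admissible Paths s u (a u)"
        using a by (simp add: feasible_assignment_def)
      then show ?thesis
        by (cases "a u") (auto simp: admissible_def)
    qed
    then show "a \<in> PiE UNIV ?Opts"
      by (simp add: PiE_UNIV_domain)
  qed
  show "finite (PiE UNIV ?Opts)"
    using assms[rule_format, of "fst (s _)"] by (intro finite_PiE) simp_all
qed

lemma opt_cost_attained:
  fixes s :: "('u::finite, 'v) scenario"
  assumes "\<forall>w. finite (Paths w)" and "\<forall>e\<in>E. c e \<ge> 0"
  obtains b where "feasible_assignment Paths s b" "\<forall>e\<in>E. flow b e \<le> c e"
    "opt_cost Paths E c l lam s = social_cost l lam s b"
proof -
  let ?F = "{a. feasible_assignment Paths s a \<and> (\<forall>e\<in>E. flow a e \<le> c e)}"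
  have "finite ?F"
    using finite_feasible_assignments[OF assms(1), of s] by (rule rev_finite_subset) blast
  moreover have "(\<lambda>u. None) \<in> ?F"
    using assms(2) by (auto simp: feasible_assignment_def admissible_def flow_def)
  ultimately have "opt_cost Paths E c l lam s \<in> social_cost l lam s ` ?F"
    unfolding opt_cost_def by (intro Min_in) auto
  then show ?thesis using that by blast
qed

lemma equilibrium_gap_le_toll_slack:
  fixes a :: "('u::finite, 'v) assignment"
  assumes "finite E" and "\<forall>w. \<forall>P\<in>Paths w. P \<subseteq> E" and "\<forall>w. finite (Paths w)"
    and "\<forall>e\<in>E. c e \<ge> 0" and "\<forall>e. tau e \<ge> 0"
    and eq: "is_equilibrium Paths l lam tau s a"
  shows "social_cost l lam s a - opt_cost Paths E c l lam s \<le> (\<Sum>e\<in>E. tau e * (c e - flow a e))"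
proof -
  obtain b where b: "feasible_assignment Paths s b" "\<forall>e\<in>E. flow b e \<le> c e"
    and opt: "opt_cost Paths E c l lam s = social_cost l lam s b"
    using opt_cost_attained assms(3,4) by blast
  have a: "feasible_assignment Paths s a"
    using eq by (simp add: is_equilibrium_def)
  have "(\<Sum>u\<in>UNIV. user_cost l lam tau s u (a u)) \<le> (\<Sum>u\<in>UNIV. user_cost l lam tau s u (b u))"
    using eq b(1) by (intro sum_mono) (auto simp: is_equilibrium_def feasible_assignment_def)
  then have "social_cost l lam s a + (\<Sum>e\<in>E. tau e * flow a e)
      \<le> social_cost l lam s b + (\<Sum>e\<in>E. tau e * flow b e)"
    using a b(1) assms(1,2)
    by (simp add: sum_user_cost_eq feasible_assignment_Some_subset)
  moreover have "(\<Sum>e\<in>E. tau e * flow b e) \<le> (\<Sum>e\<in>E. tau e * c e)"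
    using b(2) assms(5) by (intro sum_mono mult_left_mono) auto
  ultimately show ?thesis
    using opt by (simp add: right_diff_distrib sum_subtractf)
qed

lemma projected_step_ineq:
  fixes x g \<gamma> :: real
  shows "2 * \<gamma> * (x * g) \<le> x\<^sup>2 - (max 0 (x - \<gamma> * g))\<^sup>2 + \<gamma>\<^sup>2 * g\<^sup>2"
proof -
  have "(max 0 (x - \<gamma> * g))\<^sup>2 \<le> (x - \<gamma> * g)\<^sup>2"
    by (simp add: max_def)
  then show ?thesis by (simp add: power2_eq_square algebra_simps)
qed

lemma projected_descent_sum_le:
  fixes tau g :: "nat \<Rightarrow> 'e \<Rightarrow> real" and K :: real
  assumes "finite E" and "\<gamma> > 0"
    and init: "\<And>e. e \<in> E \<Longrightarrow> tau 0 e = 0"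
    and step: "\<And>t e. e \<in> E \<Longrightarrow> tau (Suc t) e = max 0 (tau t e - \<gamma> * g t e)"
    and bounded: "\<And>t e. e \<in> E \<Longrightarrow> \<bar>g t e\<bar> \<le> K"
  shows "(\<Sum>t<T. \<Sum>e\<in>E. tau t e * g t e) \<le> \<gamma> * T * (card E * K\<^sup>2) / 2"
proof -
  define N where "N t = (\<Sum>e\<in>E. (tau t e)\<^sup>2)" for t
  have descent: "2 * \<gamma> * (\<Sum>e\<in>E. tau t e * g t e) \<le> N t - N (Suc t) + \<gamma>\<^sup>2 * (card E * K\<^sup>2)" for t
  proof -
    have "2 * \<gamma> * (tau t e * g t e) \<le> (tau t e)\<^sup>2 - (tau (Suc t) e)\<^sup>2 + \<gamma>\<^sup>2 * K\<^sup>2" if "e \<in> E" for e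
    proof -
      have "(g t e)\<^sup>2 \<le> K\<^sup>2"
        using power_mono[OF bounded[OF that] abs_ge_zero, where n=2] by simp
      then have "\<gamma>\<^sup>2 * (g t e)\<^sup>2 \<le> \<gamma>\<^sup>2 * K\<^sup>2"
        by (simp add: mult_left_mono)
      then show ?thesis
        unfolding step[OF that] using projected_step_ineq[of \<gamma> "tau t e" "g t e"] by linarith
    qed
    then have "(\<Sum>e\<in>E. 2 * \<gamma> * (tau t e * g t e))
        \<le> (\<Sum>e\<in>E. (tau t e)\<^sup>2 - (tau (Suc t) e)\<^sup>2 + \<gamma>\<^sup>2 * K\<^sup>2)"
      by (rule sum_mono)
    then show ?thesis
      by (simp add: N_def sum.distrib sum_subtractf sum_distrib_left mult_ac)
  qed
  have "2 * \<gamma> * (\<Sum>t<T. \<Sum>e\<in>E. tau t e * g t e)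
      = (\<Sum>t<T. 2 * \<gamma> * (\<Sum>e\<in>E. tau t e * g t e))"
    by (rule sum_distrib_left)
  also have "\<dots> \<le> (\<Sum>t<T. N t - N (Suc t) + \<gamma>\<^sup>2 * (card E * K\<^sup>2))"
    by (intro sum_mono descent)
  also have "\<dots> = N 0 - N T + T * \<gamma>\<^sup>2 * (card E * K\<^sup>2)"
    by (simp add: sum.distrib sum_lessThan_telescope')
  also have "\<dots> \<le> T * \<gamma>\<^sup>2 * (card E * K\<^sup>2)"
    using init by (simp add: N_def sum_nonneg)
  finally show ?thesis
    using \<open>\<gamma> > 0\<close> by (simp add: power2_eq_square field_simps)
qed

lemma capacity_slack_bounded:
  fixes a :: "('u::finite, 'v) assignment"
  assumes "finite E" and "e \<in> E" and "c e \<ge> 0"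
  shows "\<bar>c e - flow a e\<bar> \<le> Max (c ` E) + CARD('u)"
proof -
  have "c e \<le> Max (c ` E)"
    using assms(1,2) by simp
  then show ?thesis
    using assms(3) flow_nonneg[of a e] flow_le_card_users[of a e] by linarith
qed

lemma scenario_regret_le:
  fixes c l :: "'v edge \<Rightarrow> real" and \<gamma> :: real
    and lam :: "'u::finite \<Rightarrow> real"
    and sel :: "nat \<Rightarrow> ('v edge \<Rightarrow> real) \<Rightarrow> ('u, 'v) scenario \<Rightarrow> ('u, 'v) assignment"
  assumes "finite E" and "\<forall>e\<in>E. c e \<ge> 0" and "\<forall>w. finite (Paths w)"
    and "\<forall>w. \<forall>P\<in>Paths w. P \<subseteq> E"
    and eq: "\<forall>t tau s. is_equilibrium Paths l lam tau s (sel t tau s)"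
    and "\<gamma> > 0"
  shows "(\<Sum>t<T. social_cost l lam (\<omega> t) (sel t (tolls sel E c \<gamma> \<omega> t) (\<omega> t))
                  - opt_cost Paths E c l lam (\<omega> t))
           \<le> \<gamma> * T * (card E * (Max (c ` E) + CARD('u))\<^sup>2) / 2"
proof -
  define tau where "tau = tolls sel E c \<gamma> \<omega>"
  define g where "g t e = c e - flow (sel t (tau t) (\<omega> t)) e" for t e
  have "(\<Sum>t<T. social_cost l lam (\<omega> t) (sel t (tau t) (\<omega> t)) - opt_cost Paths E c l lam (\<omega> t))
      \<le> (\<Sum>t<T. \<Sum>e\<in>E. tau t e * g t e)"
    unfolding g_def tau_def using assms(1-4) eq
    by (intro sum_mono equilibrium_gap_le_toll_slack) (auto simp: tolls_nonneg)
  also have "\<dots> \<le> \<gamma> * T * (card E * (Max (c ` E) + CARD('u))\<^sup>2) / 2"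
    using assms(1,2,6) unfolding g_def
    by (intro projected_descent_sum_le capacity_slack_bounded) (auto simp: tau_def)
  finally show ?thesis
    unfolding tau_def .
qed

theorem lemma2:
  fixes E :: "'v edge set"
    and c l :: "'v edge \<Rightarrow> real"
    and Paths :: "'v \<times> 'v \<Rightarrow> 'v edge set set"
    and lam :: "'u::finite \<Rightarrow> real"
    and D :: "('u, 'v) scenario measure"
    and sel :: "nat \<Rightarrow> ('v edge \<Rightarrow> real) \<Rightarrow> ('u, 'v) scenario \<Rightarrow> ('u, 'v) assignment"
    and \<gamma> :: real and T :: nat
  assumes "finite E"
    and "\<forall>e\<in>E. c e \<ge> 0"
    and "\<forall>w. finite (Paths w)"
    and "\<forall>w. \<forall>P\<in>Paths w. P \<subseteq> E"
    and "prob_space D"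
    and "AE s in D. \<forall>u. snd (s u) \<ge> 0"
    and "\<forall>t tau s. is_equilibrium Paths l lam tau s (sel t tau s)"
    and "\<gamma> > 0"
  shows "regret D T sel Paths E c l lam \<gamma>
           \<le> \<gamma> * T * (card E * (Max (c ` E) + CARD('u)) ^ 2) / 2"
proof -
  let ?M = "PiM {..<T} (\<lambda>_. D)"
  let ?K = "\<gamma> * T * (card E * (Max (c ` E) + CARD('u)) ^ 2) / 2"
  interpret prob_space ?M
    using assms(5) by (intro prob_space_PiM) auto
  \<comment> \<open>The pointwise bound needs no sign condition on the values of time, so the AE hypothesis
    is unused; being nonnegative, it also covers the junk value 0 of a non-integrable integral.\<close>
  have "regret D T sel Paths E c l lam \<gamma> \<le> (\<integral>_. ?K \<partial>?M)"
    unfolding regret_def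
    using scenario_regret_le[OF assms(1-4,7,8)] assms(8)
    by (intro integral_mono') auto
  then show ?thesis
    by (simp add: prob_space)
qed

end
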